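(* Let $P, P' \subset \mathbb{R}^d$ be smooth $d$-dimensional prismatoids which are Minkowski equivalent, and whose tops and bottoms each lie in hyperplanes of the form $\{x \in \mathbb{R}^d : x_d = c\}$ with $c \in \mathbb{Z}$. Let $S_0,\dots,S_h$ be the slices of $P$ and $S'_0,\dots,S'_{h'}$ the slices of $P'$, and suppose that for all $l$ and $m$ the pair $(S_l, S'_m)$ is IDP. Then the pair $(P, P')$ is IDP.
   Context: A lattice polytope is the convex hull of finitely many points of $\mathbb{Z}^d$. A $d$-dimensional polytope is simple if each vertex lies in exactly $d$ edges; the primitive edge directions at a vertex are the smallest lattice vectors along its incident edges; a $d$-dimensional lattice polytope in $\mathbb{R}^d$ is smooth if it is simple and at every vertex the primitive edge directions form a basis of $\mathbb{Z}^d$. A $d$-dimensional prism is a polytope affinely equivalent to $Q \times [0,1]$ for some $(d-1)$-dimensional polytope $Q$, with top and bottom facets the images of $Q\times\{1\}$ and $Q\times\{0\}$. A prismatoid is a polytope whose face lattice is isomorphic to that of a prism and such that the facets corresponding to the top and bottom facets (its top and bottom) are parallel, i.e. the linear subspaces parallel to their affine hulls coincide. Two polytopes are Minkowski equivalent if they have the same normal fan. If a prismatoid $P$ has bottom in $\{x: x_d = b\}$ and top in $\{x : x_d = b+h\}$ with integers $b$, $h\ge 0$ (after naming top and bottom so that $h \geq 0$), its slices are $S_l = P \cap \{x : x_d = b+l\}$ for $l = 0,1,\dots,h$. For lattice polytopes $A,B$, the pair $(A,B)$ is IDP if every lattice point of $A+B$ is the sum of a lattice point of $A$ and a lattice point of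 $B$. *)

theory Defs
  imports "HOL-Analysis.Analysis"
begin

definition lattice :: "'a::euclidean_space set" where
  "lattice = {x. \<forall>b\<in>Basis. x \<bullet> b \<in> \<int>}"

definition lattice_polytope :: "'a::euclidean_space set \<Rightarrow> bool" where
  "lattice_polytope P \<longleftrightarrow> (\<exists>V. finite V \<and> V \<subseteq> lattice \<and> P = convex hull V)"

definition is_edge_of :: "'a::euclidean_space set \<Rightarrow> 'a set \<Rightarrow> bool" where
  "is_edge_of E P \<longleftrightarrow> E face_of P \<and> aff_dim E = 1"

definition is_vertex_of :: "'a::euclidean_space \<Rightarrow> 'a set \<Rightarrow> bool" where
  "is_vertex_of v P \<longleftrightarrow> v extreme_point_of P"

definition simple_polytope :: "'a::euclidean_space set \<Rightarrow> bool" where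
  "simple_polytope P \<longleftrightarrow> polytope P \<and> aff_dim P = DIM('a) \<and>
     (\<forall>v. is_vertex_of v P \<longrightarrow> card {E. is_edge_of E P \<and> v \<in> E} = DIM('a))"

definition primitive_edge_direction :: "'a::euclidean_space \<Rightarrow> 'a set \<Rightarrow> 'a \<Rightarrow> bool" where
  "primitive_edge_direction v E u \<longleftrightarrow>
     u \<in> lattice \<and> u \<noteq> 0 \<and> (\<exists>x\<in>E. x \<noteq> v \<and> (\<exists>t>0. x - v = t *\<^sub>R u)) \<and>
     (\<forall>s. 0 < s \<and> s < 1 \<longrightarrow> s *\<^sub>R u \<notin> lattice)"

definition primitive_edge_directions :: "'a::euclidean_space set \<Rightarrow> 'a \<Rightarrow> 'a set" where
  "primitive_edge_directions P v =
     {u. \<exists>E. is_edge_of E P \<and> v \<in> E \<and> primitive_edge_direction v E u}"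

definition lattice_basis :: "'a::euclidean_space set \<Rightarrow> bool" where
  "lattice_basis D \<longleftrightarrow> finite D \<and> card D = DIM('a) \<and> D \<subseteq> lattice \<and> independent D \<and>
     {\<Sum>u\<in>D. of_int (c u) *\<^sub>R u | c. True} = lattice"

definition smooth_polytope :: "'a::euclidean_space set \<Rightarrow> bool" where
  "smooth_polytope P \<longleftrightarrow> lattice_polytope P \<and> simple_polytope P \<and>
     (\<forall>v. is_vertex_of v P \<longrightarrow> lattice_basis (primitive_edge_directions P v))"

definition face_lattice_iso :: "('a::euclidean_space set \<Rightarrow> 'a set) \<Rightarrow> 'a set \<Rightarrow> 'a set \<Rightarrow> bool" where
  "face_lattice_iso f P R \<longleftrightarrow> bij_betw f {F. F face_of P} {G. G face_of R} \<and>
     (\<forall>F G. F face_of P \<longrightarrow> G face_of P \<longrightarrow> (F \<subseteq> G \<longleftrightarrow> f F \<subseteq> f G))"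

text \<open>The standard prism Q \<times> [0,1] over a (d-1)-polytope Q lying in the hyperplane x\<bullet>e = 0,
  realised as Q + [0,e]; its bottom is Q and its top is Q + e.\<close>
definition prism_over :: "'a::euclidean_space \<Rightarrow> 'a set \<Rightarrow> 'a set" where
  "prism_over e Q = {q + t *\<^sub>R e | q t. q \<in> Q \<and> 0 \<le> t \<and> t \<le> 1}"

definition prismatoid :: "'a::euclidean_space set \<Rightarrow> 'a set \<Rightarrow> 'a set \<Rightarrow> bool" where
  "prismatoid P T B \<longleftrightarrow> polytope P \<and>
     (\<exists>e Q f. e \<in> Basis \<and> polytope Q \<and> Q \<subseteq> {x. x \<bullet> e = 0} \<and>
        aff_dim Q = int DIM('a) - 1 \<and>
        face_lattice_iso f P (prism_over e Q) \<and>
        T face_of P \<and> B face_of P \<and>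
        f T = (\<lambda>q. q + e) ` Q \<and> f B = Q) \<and>
     affine_parallel (affine hull T) (affine hull B)"

definition normal_cone :: "'a::euclidean_space set \<Rightarrow> 'a set \<Rightarrow> 'a set" where
  "normal_cone P F = {u. \<forall>x\<in>F. \<forall>y\<in>P. u \<bullet> y \<le> u \<bullet> x}"

definition normal_fan :: "'a::euclidean_space set \<Rightarrow> 'a set set" where
  "normal_fan P = {normal_cone P F | F. F face_of P \<and> F \<noteq> {}}"

definition minkowski_equivalent :: "'a::euclidean_space set \<Rightarrow> 'a set \<Rightarrow> bool" where
  "minkowski_equivalent P P' \<longleftrightarrow> normal_fan P = normal_fan P'"

definition IDP_pair :: "'a::euclidean_space set \<Rightarrow> 'a set \<Rightarrow> bool" where
  "IDP_pair A B \<longleftrightarrow> (\<forall>z \<in> lattice \<inter> {x + y | x y. x \<in> A \<and> y \<in> B}.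
     \<exists>x \<in> A \<inter> lattice. \<exists>y \<in> B \<inter> lattice. z = x + y)"

text \<open>Slices of P with bottom at level b and top at level b+h (h \<ge> 0) in coordinate e:
  S_l = P \<inter> {x\<bullet>e = b + l}, l = 0..h.\<close>
definition slice :: "'a::euclidean_space \<Rightarrow> 'a set \<Rightarrow> int \<Rightarrow> 'a set" where
  "slice e P c = P \<inter> {x. x \<bullet> e = of_int c}"

end

theory Submission
  imports Defs
begin

(* Both prismatoids are convex hulls P = conv (B \<union> T) of a bottom B at height b and a top T at
  height c > b. With h the support function, put K(u) = (h_T(u) - h_B(u)) / (c - b): the points
  of P at height r have u-value at most h_B(u) + (r - b) K(u), with equality attained. Moreover
  -K(u) is the largest t for which u + t e is maximised on B, i.e. shares a normal cone of P with
  -e; so K(u) depends only on the normal fan and is the same for P and P'. A separation argument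
  then shows that if x in P and y in P' lie at heights s and t, then x + y also lies in the sum
  of the slices of P at height s - 1 and of P' at height t + 1.
  Now let x + y be a lattice point with x at height l + \<theta>, 0 < \<theta> < 1. Writing x and y as
  convex combinations of points p, q and p', q' at adjacent integral heights gives
  x + y = (1 - \<theta>)(p + q') + \<theta>(q + p'); both sums lie in the convex set S_l + S'_(m+1), and
  the IDP property of the slices finishes the proof. *)

definition support_fun :: "'a::real_inner set \<Rightarrow> 'a \<Rightarrow> real" where
  "support_fun A u = (SUP x\<in>A. u \<bullet> x)"

lemma inner_le_support_fun:
  fixes A :: "'a::euclidean_space set"
  assumes "compact A" "x \<in> A"
  shows "u \<bullet> x \<le> support_fun A u"
proof -
  have "bounded ((\<lambda>x. u \<bullet> x) ` A)"
    using assms(1) by (intro compact_imp_bounded compact_continuous_image continuous_intros)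
  then show ?thesis
    unfolding support_fun_def using assms(2) by (intro cSUP_upper bounded_imp_bdd_above)
qed

lemma support_fun_attained:
  fixes A :: "'a::euclidean_space set"
  assumes "compact A" "A \<noteq> {}"
  obtains x where "x \<in> A" "u \<bullet> x = support_fun A u"
proof -
  have "continuous_on A (\<lambda>x. u \<bullet> x)"
    by (intro continuous_intros)
  then obtain x where x: "x \<in> A" "\<forall>y\<in>A. u \<bullet> y \<le> u \<bullet> x"
    using continuous_attains_sup[OF assms] by blast
  then have "support_fun A u = u \<bullet> x"
    unfolding support_fun_def by (intro cSup_eq_maximum) auto
  with x that show ?thesis by simp
qed

lemma compact_set_plus:
  fixes S T :: "'a::real_normed_vector set"
  assumes "compact S" "compact T"
  shows "compact (S + T)"
  unfolding set_plus_image split_def using assms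
  by (intro compact_continuous_image compact_Times continuous_intros)

definition layer_slope :: "'a::real_inner set \<Rightarrow> 'a set \<Rightarrow> real \<Rightarrow> 'a \<Rightarrow> real" where
  "layer_slope B T h u = (support_fun T u - support_fun B u) / h"

section \<open>Convex hulls of two parallel layers\<close>

locale two_layer_hull =
  fixes e :: "'a::euclidean_space" and B T P :: "'a set" and b c :: real
  assumes convex_bottom: "convex B" and compact_bottom: "compact B" and bottom_nonempty: "B \<noteq> {}"
    and convex_top: "convex T" and compact_top: "compact T" and top_nonempty: "T \<noteq> {}"
    and bottom_level: "B \<subseteq> {x. x \<bullet> e = b}" and top_level: "T \<subseteq> {x. x \<bullet> e = c}"
    and levels_less: "b < c"
    and hull_eq: "P = convex hull (B \<union> T)"
begin

abbreviation slope :: "'a \<Rightarrow> real" where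
  "slope \<equiv> layer_slope B T (c - b)"

lemma convex_P: "convex P"
  by (simp add: hull_eq)

lemma compact_P: "compact P"
  by (simp add: hull_eq compact_convex_hull compact_Un compact_bottom compact_top)

lemma compact_convex_layer: "compact (P \<inter> {x. x \<bullet> e = r})" "convex (P \<inter> {x. x \<bullet> e = r})"
proof -
  have "{x. x \<bullet> e = r} = {x. e \<bullet> x = r}"
    by (auto simp: inner_commute)
  then show "compact (P \<inter> {x. x \<bullet> e = r})" "convex (P \<inter> {x. x \<bullet> e = r})"
    using compact_P convex_P
    by (simp_all add: compact_Int_closed closed_hyperplane convex_Int convex_hyperplane)
qed

lemma segment_point_level:
  assumes "\<beta> \<in> B" "\<tau> \<in> T"
  shows "((1 - \<theta>) *\<^sub>R \<beta> + \<theta> *\<^sub>R \<tau>) \<bullet> e = b + \<theta> * (c - b)"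
proof -
  have "\<beta> \<bullet> e = b" "\<tau> \<bullet> e = c"
    using assms bottom_level top_level by auto
  then show ?thesis by (simp add: inner_add_left algebra_simps)
qed

lemma segment_point_mem:
  assumes "\<beta> \<in> B" "\<tau> \<in> T" "0 \<le> \<theta>" "\<theta> \<le> 1"
  shows "(1 - \<theta>) *\<^sub>R \<beta> + \<theta> *\<^sub>R \<tau> \<in> P"
  unfolding hull_eq using assms
  by (intro convexD convex_convex_hull) (auto intro: hull_inc)

lemma hull_decompose:
  assumes "x \<in> P"
  obtains \<beta> \<tau> where "\<beta> \<in> B" "\<tau> \<in> T"
    "x = (1 - (x \<bullet> e - b) / (c - b)) *\<^sub>R \<beta> + ((x \<bullet> e - b) / (c - b)) *\<^sub>R \<tau>"
    "b \<le> x \<bullet> e" "x \<bullet> e \<le> c"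
proof -
  obtain \<theta> \<beta> \<tau> where x: "x = (1 - \<theta>) *\<^sub>R \<beta> + \<theta> *\<^sub>R \<tau>" "0 \<le> \<theta>" "\<theta> \<le> 1" "\<beta> \<in> B" "\<tau> \<in> T"
    using assms unfolding hull_eq
      convex_hull_union_two[OF convex_bottom bottom_nonempty convex_top top_nonempty]
    by (force simp: eq_diff_eq')
  then have "x \<bullet> e = b + \<theta> * (c - b)" using segment_point_level by blast
  moreover have "0 \<le> \<theta> * (c - b)" "\<theta> * (c - b) \<le> c - b"
    using levels_less x(2,3) by (simp_all add: mult_left_le_one_le)
  ultimately have "\<theta> = (x \<bullet> e - b) / (c - b)" "b \<le> x \<bullet> e" "x \<bullet> e \<le> c"
    using levels_less by (simp_all add: field_simps)
  with x show ?thesis by (intro that) simp_all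
qed

lemma level_bounds:
  assumes "x \<in> P"
  shows "b \<le> x \<bullet> e" "x \<bullet> e \<le> c"
  using hull_decompose[OF assms] by blast+

lemma bottom_layer: "P \<inter> {x. x \<bullet> e = b} = B"
proof
  show "P \<inter> {x. x \<bullet> e = b} \<subseteq> B"
  proof
    fix x assume "x \<in> P \<inter> {x. x \<bullet> e = b}"
    then obtain \<beta> \<tau> where "\<beta> \<in> B" "x = \<beta>"
      using hull_decompose[of x] by auto
    then show "x \<in> B" by simp
  qed
  show "B \<subseteq> P \<inter> {x. x \<bullet> e = b}"
    using bottom_level by (auto simp: hull_eq hull_inc)
qed

lemma bottom_face: "B face_of P"
proof -
  have "P \<inter> {x. e \<bullet> x = b} face_of P"
    using convex_P level_bounds
    by (intro face_of_Int_supporting_hyperplane_ge) (auto simp: inner_commute)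
  then show ?thesis
    using bottom_layer by (simp add: inner_commute)
qed

lemma inner_le_slope:
  assumes "x \<in> P"
  shows "u \<bullet> x \<le> support_fun B u + (x \<bullet> e - b) * slope u"
proof -
  define \<theta> where "\<theta> = (x \<bullet> e - b) / (c - b)"
  obtain \<beta> \<tau> where "\<beta> \<in> B" "\<tau> \<in> T" and x: "x = (1 - \<theta>) *\<^sub>R \<beta> + \<theta> *\<^sub>R \<tau>"
    and "0 \<le> \<theta>" "\<theta> \<le> 1"
    using hull_decompose[OF assms] levels_less unfolding \<theta>_def by (auto simp: field_simps)
  then have "u \<bullet> x \<le> (1 - \<theta>) * support_fun B u + \<theta> * support_fun T u"
    by (auto simp: inner_add_right compact_bottom compact_top
        intro!: add_mono mult_left_mono inner_le_support_fun)
  also have "\<dots> = support_fun B u + \<theta> * (support_fun T u - support_fun B u)"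
    by (simp add: algebra_simps)
  also have "\<dots> = support_fun B u + (x \<bullet> e - b) * slope u"
    unfolding \<theta>_def layer_slope_def by simp
  finally show ?thesis .
qed

lemma slope_attained:
  assumes "b \<le> r" "r \<le> c"
  obtains z where "z \<in> P" "z \<bullet> e = r" "u \<bullet> z = support_fun B u + (r - b) * slope u"
proof -
  define \<theta> where "\<theta> = (r - b) / (c - b)"
  obtain \<beta> where \<beta>: "\<beta> \<in> B" "u \<bullet> \<beta> = support_fun B u"
    using support_fun_attained[OF compact_bottom bottom_nonempty] .
  obtain \<tau> where \<tau>: "\<tau> \<in> T" "u \<bullet> \<tau> = support_fun T u"
    using support_fun_attained[OF compact_top top_nonempty] .
  have "0 \<le> \<theta>" "\<theta> \<le> 1"
    using assms levels_less unfolding \<theta>_def by (simp_all add: field_simps)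
  then have "(1 - \<theta>) *\<^sub>R \<beta> + \<theta> *\<^sub>R \<tau> \<in> P"
    using \<beta> \<tau> by (intro segment_point_mem)
  moreover have "((1 - \<theta>) *\<^sub>R \<beta> + \<theta> *\<^sub>R \<tau>) \<bullet> e = r"
    using segment_point_level[OF \<beta>(1) \<tau>(1)] levels_less unfolding \<theta>_def by simp
  moreover have "u \<bullet> ((1 - \<theta>) *\<^sub>R \<beta> + \<theta> *\<^sub>R \<tau>)
      = support_fun B u + \<theta> * (support_fun T u - support_fun B u)"
    using \<beta> \<tau> by (simp add: inner_add_right algebra_simps)
  then have "u \<bullet> ((1 - \<theta>) *\<^sub>R \<beta> + \<theta> *\<^sub>R \<tau>) = support_fun B u + (r - b) * slope u"
    unfolding \<theta>_def layer_slope_def by simp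
  ultimately show ?thesis by (rule that)
qed

lemma bottom_maximizes_iff:
  "(\<exists>x\<in>B. \<forall>y\<in>P. (u + t *\<^sub>R e) \<bullet> y \<le> (u + t *\<^sub>R e) \<bullet> x) \<longleftrightarrow> t \<le> - slope u"
proof -
  obtain \<beta> where \<beta>: "\<beta> \<in> B" "u \<bullet> \<beta> = support_fun B u"
    using support_fun_attained[OF compact_bottom bottom_nonempty] .
  obtain \<tau> where \<tau>: "\<tau> \<in> T" "u \<bullet> \<tau> = support_fun T u"
    using support_fun_attained[OF compact_top top_nonempty] .
  have level: "y \<bullet> e = b" if "y \<in> B" for y
    using that bottom_level by auto
  have shifted: "(u + t *\<^sub>R e) \<bullet> y = u \<bullet> y + t * (y \<bullet> e)" for y
    unfolding inner_add_left inner_scaleR_left by (simp add: inner_commute)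
  have "t \<le> - slope u \<longleftrightarrow> u \<bullet> \<tau> + t * c \<le> u \<bullet> \<beta> + t * b"
    using levels_less \<beta> \<tau> unfolding layer_slope_def by (simp add: field_simps)
  also have "\<dots> \<longleftrightarrow> (\<exists>x\<in>B. \<forall>y\<in>P. (u + t *\<^sub>R e) \<bullet> y \<le> (u + t *\<^sub>R e) \<bullet> x)"
  proof
    assume ineq: "u \<bullet> \<tau> + t * c \<le> u \<bullet> \<beta> + t * b"
    have "y \<in> {y. (u + t *\<^sub>R e) \<bullet> y \<le> (u + t *\<^sub>R e) \<bullet> \<beta>}" if "y \<in> B \<union> T" for y
      using that
    proof
      assume "y \<in> B"
      then show ?thesis
        using level \<beta> inner_le_support_fun[OF compact_bottom, of y u] by (simp add: shifted)
    next
      assume "y \<in> T"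
      then show ?thesis
        using level \<beta> ineq top_level inner_le_support_fun[OF compact_top, of y u] \<tau>
        by (auto simp: shifted)
    qed
    then have "P \<subseteq> {y. (u + t *\<^sub>R e) \<bullet> y \<le> (u + t *\<^sub>R e) \<bullet> \<beta>}"
      unfolding hull_eq by (intro hull_minimal convex_halfspace_le) auto
    with \<beta> show "\<exists>x\<in>B. \<forall>y\<in>P. (u + t *\<^sub>R e) \<bullet> y \<le> (u + t *\<^sub>R e) \<bullet> x"
      by blast
  next
    assume "\<exists>x\<in>B. \<forall>y\<in>P. (u + t *\<^sub>R e) \<bullet> y \<le> (u + t *\<^sub>R e) \<bullet> x"
    then obtain x where x: "x \<in> B" "\<forall>y\<in>P. (u + t *\<^sub>R e) \<bullet> y \<le> (u + t *\<^sub>R e) \<bullet> x"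
      by blast
    have "\<tau> \<in> P"
      using \<tau> by (simp add: hull_eq hull_inc)
    then have "u \<bullet> \<tau> + t * (\<tau> \<bullet> e) \<le> u \<bullet> x + t * (x \<bullet> e)"
      using x(2) by (simp add: shifted)
    then have "u \<bullet> \<tau> + t * c \<le> u \<bullet> x + t * b"
      using \<tau>(1) x(1) top_level level by auto
    also have "u \<bullet> x \<le> u \<bullet> \<beta>"
      using \<beta> x inner_le_support_fun[OF compact_bottom] by simp
    finally show "u \<bullet> \<tau> + t * c \<le> u \<bullet> \<beta> + t * b"
      by simp
  qed
  finally show ?thesis ..
qed

lemma bottom_maximizes_iff_normal_fan:
  "(\<exists>x\<in>B. \<forall>y\<in>P. w \<bullet> y \<le> w \<bullet> x) \<longleftrightarrow> (\<exists>C\<in>normal_fan P. -e \<in> C \<and> w \<in> C)"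
proof
  assume "\<exists>x\<in>B. \<forall>y\<in>P. w \<bullet> y \<le> w \<bullet> x"
  then obtain x where x: "x \<in> B" "\<forall>y\<in>P. w \<bullet> y \<le> w \<bullet> x"
    by blast
  define F where "F = B \<inter> {y. w \<bullet> y = w \<bullet> x}"
  have "F face_of B"
    unfolding F_def using x face_of_imp_subset[OF bottom_face]
    by (intro face_of_Int_supporting_hyperplane_le convex_bottom) auto
  then have "F face_of P" "F \<noteq> {}"
    using face_of_trans[OF _ bottom_face] x unfolding F_def by auto
  moreover have "w \<in> normal_cone P F"
    unfolding normal_cone_def F_def using x by auto
  moreover have "-e \<in> normal_cone P F"
    unfolding normal_cone_def F_def using bottom_level level_bounds by (auto simp: inner_commute)
  ultimately show "\<exists>C\<in>normal_fan P. -e \<in> C \<and> w \<in> C"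
    unfolding normal_fan_def by blast
next
  assume "\<exists>C\<in>normal_fan P. -e \<in> C \<and> w \<in> C"
  then obtain F where F: "F face_of P" "F \<noteq> {}" "-e \<in> normal_cone P F" "w \<in> normal_cone P F"
    unfolding normal_fan_def by blast
  then obtain x where x: "x \<in> F" "x \<in> P"
    using face_of_imp_subset by blast
  obtain \<beta> where "\<beta> \<in> B"
    using bottom_nonempty by blast
  then have "-e \<bullet> \<beta> \<le> -e \<bullet> x" "\<beta> \<bullet> e = b"
    using F(3) x(1) bottom_level face_of_imp_subset[OF bottom_face]
    unfolding normal_cone_def by auto
  then have "x \<in> P \<inter> {x. x \<bullet> e = b}"
    using level_bounds[OF x(2)] x(2) by (simp add: inner_commute)
  then have "x \<in> B"
    using bottom_layer by simp
  moreover have "\<forall>y\<in>P. w \<bullet> y \<le> w \<bullet> x"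
    using F(4) x(1) unfolding normal_cone_def by blast
  ultimately show "\<exists>x\<in>B. \<forall>y\<in>P. w \<bullet> y \<le> w \<bullet> x"
    by blast
qed

lemma layer_interpolate:
  assumes "x \<in> P" "b \<le> r" "r \<le> x \<bullet> e" "x \<bullet> e \<le> r'" "r' \<le> c" "r < r'"
  obtains p q where "p \<in> P" "p \<bullet> e = r" "q \<in> P" "q \<bullet> e = r'"
    "x = (1 - (x \<bullet> e - r) / (r' - r)) *\<^sub>R p + ((x \<bullet> e - r) / (r' - r)) *\<^sub>R q"
proof -
  obtain \<beta> \<tau> where \<beta>\<tau>: "\<beta> \<in> B" "\<tau> \<in> T"
    and x: "x = (1 - (x \<bullet> e - b) / (c - b)) *\<^sub>R \<beta> + ((x \<bullet> e - b) / (c - b)) *\<^sub>R \<tau>"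
    using hull_decompose[OF assms(1)] by blast
  define point where "point s = (1 - (s - b) / (c - b)) *\<^sub>R \<beta> + ((s - b) / (c - b)) *\<^sub>R \<tau>" for s
  have point_mem: "point s \<in> P" if "b \<le> s" "s \<le> c" for s
    unfolding point_def using that levels_less \<beta>\<tau> by (intro segment_point_mem) auto
  have point_level: "point s \<bullet> e = s" for s
    unfolding point_def using segment_point_level[OF \<beta>\<tau>] levels_less by simp
  have point_affine:
    "(1 - \<mu>) *\<^sub>R point s + \<mu> *\<^sub>R point s' = point ((1 - \<mu>) * s + \<mu> * s')" for \<mu> s s'
  proof -
    have pt: "point s = \<beta> + ((s - b) / (c - b)) *\<^sub>R (\<tau> - \<beta>)" for s
      unfolding point_def by (simp add: algebra_simps)
    have "(1 - \<mu>) *\<^sub>R point s + \<mu> *\<^sub>R point s'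
        = \<beta> + ((1 - \<mu>) * ((s - b) / (c - b)) + \<mu> * ((s' - b) / (c - b))) *\<^sub>R (\<tau> - \<beta>)"
      unfolding pt by (simp add: algebra_simps)
    also have "(1 - \<mu>) * ((s - b) / (c - b)) + \<mu> * ((s' - b) / (c - b))
        = ((1 - \<mu>) * s + \<mu> * s' - b) / (c - b)"
      by (simp add: diff_divide_distrib add_divide_distrib algebra_simps)
    finally show ?thesis
      by (simp only: pt)
  qed
  define \<mu> where "\<mu> = (x \<bullet> e - r) / (r' - r)"
  have "\<mu> * (r' - r) = x \<bullet> e - r"
    unfolding \<mu>_def using assms(6) by simp
  then have "(1 - \<mu>) * r + \<mu> * r' = x \<bullet> e"
    by (simp add: algebra_simps)
  then have "x = (1 - \<mu>) *\<^sub>R point r + \<mu> *\<^sub>R point r'"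
    using x unfolding point_affine by (simp add: point_def)
  moreover have "point r \<in> P" "point r' \<in> P"
    using assms by (auto intro: point_mem)
  ultimately show ?thesis
    using that[OF _ point_level _ point_level] unfolding \<mu>_def by blast
qed

end

section \<open>Two layered hulls with the same normal fan\<close>

lemma slope_eq_if_normal_fan_eq:
  assumes H: "two_layer_hull e B T P b c" and H': "two_layer_hull e B' T' P' b' c'"
    and fan: "normal_fan P = normal_fan P'"
  shows "layer_slope B T (c - b) u = layer_slope B' T' (c' - b') u"
proof -
  have "t \<le> - layer_slope B T (c - b) u \<longleftrightarrow> t \<le> - layer_slope B' T' (c' - b') u" for t
    using two_layer_hull.bottom_maximizes_iff[OF H, of u t]
      two_layer_hull.bottom_maximizes_iff[OF H', of u t]
      two_layer_hull.bottom_maximizes_iff_normal_fan[OF H]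
      two_layer_hull.bottom_maximizes_iff_normal_fan[OF H'] fan
    by simp
  from this[of "- layer_slope B T (c - b) u"] this[of "- layer_slope B' T' (c' - b') u"]
  show ?thesis by linarith
qed

lemma sum_shift_between_layers:
  assumes H: "two_layer_hull e B T P b c" and H': "two_layer_hull e B' T' P' b' c'"
    and fan: "normal_fan P = normal_fan P'"
    and a: "a \<in> P" "a \<bullet> e - \<delta> \<in> {b..c}" and a': "a' \<in> P'" "a' \<bullet> e + \<delta> \<in> {b'..c'}"
  shows "a + a' \<in> (P \<inter> {x. x \<bullet> e = a \<bullet> e - \<delta>}) + (P' \<inter> {x. x \<bullet> e = a' \<bullet> e + \<delta>})"
    (is "_ \<in> ?S")
proof (rule ccontr)
  assume "a + a' \<notin> ?S"
  moreover have "compact ?S" "convex ?S"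
    using two_layer_hull.compact_convex_layer[OF H] two_layer_hull.compact_convex_layer[OF H']
    by (simp_all add: compact_set_plus convex_set_plus)
  ultimately obtain w r where w: "w \<bullet> (a + a') < r" "\<forall>x\<in>?S. r < w \<bullet> x"
    using separating_hyperplane_closed_point compact_imp_closed by metis
  define u where "u = - w"
  define K where "K = layer_slope B T (c - b) u"
  have K': "layer_slope B' T' (c' - b') u = K"
    unfolding K_def using slope_eq_if_normal_fan_eq[OF H H' fan] by simp
  obtain z where z: "z \<in> P" "z \<bullet> e = a \<bullet> e - \<delta>"
    "u \<bullet> z = support_fun B u + (a \<bullet> e - \<delta> - b) * K"
    using two_layer_hull.slope_attained[OF H, of "a \<bullet> e - \<delta>" u] a(2) unfolding K_def by auto
  obtain z' where z': "z' \<in> P'" "z' \<bullet> e = a' \<bullet> e + \<delta>"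
    "u \<bullet> z' = support_fun B' u + (a' \<bullet> e + \<delta> - b') * K"
    using two_layer_hull.slope_attained[OF H', of "a' \<bullet> e + \<delta>" u] a'(2) unfolding K' by auto
  have "z + z' \<in> ?S"
    using z z' by (intro set_plus_intro) simp_all
  then have "r < w \<bullet> (z + z')"
    using w(2) by blast
  then have "u \<bullet> z + u \<bullet> z' < u \<bullet> a + u \<bullet> a'"
    using w(1) unfolding u_def by (simp add: inner_add_right)
  moreover have "u \<bullet> a \<le> support_fun B u + (a \<bullet> e - b) * K"
    using two_layer_hull.inner_le_slope[OF H a(1)] unfolding K_def .
  moreover have "u \<bullet> a' \<le> support_fun B' u + (a' \<bullet> e - b') * K"
    using two_layer_hull.inner_le_slope[OF H' a'(1), of u] unfolding K' .
  moreover have "u \<bullet> z + u \<bullet> z'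
      = (support_fun B u + (a \<bullet> e - b) * K) + (support_fun B' u + (a' \<bullet> e - b') * K)"
    unfolding z(3) z'(3) by (simp add: algebra_simps)
  ultimately show False
    by linarith
qed

lemma sum_mem_slices_between_levels:
  fixes b c b' c' l m :: int
  assumes H: "two_layer_hull e B T P (of_int b) (of_int c)"
    and H': "two_layer_hull e B' T' P' (of_int b') (of_int c')"
    and fan: "normal_fan P = normal_fan P'"
    and x: "x \<in> P" "x \<bullet> e = of_int l + \<theta>" and y: "y \<in> P'" "y \<bullet> e = of_int m + (1 - \<theta>)"
    and \<theta>: "0 \<le> \<theta>" "\<theta> \<le> 1"
    and l: "b \<le> l" "l + 1 \<le> c" and m: "b' \<le> m" "m + 1 \<le> c'"
  shows "x + y \<in> slice e P l + slice e P' (m + 1)"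
proof -
  obtain p q where p: "p \<in> P" "p \<bullet> e = of_int l" and q: "q \<in> P" "q \<bullet> e = of_int l + 1"
    and "x = (1 - (x \<bullet> e - of_int l) / (of_int l + 1 - of_int l)) *\<^sub>R p
           + ((x \<bullet> e - of_int l) / (of_int l + 1 - of_int l)) *\<^sub>R q"
    by (rule two_layer_hull.layer_interpolate[OF H x(1), of "of_int l" "of_int l + 1"])
      (use l x \<theta> in simp_all)
  then have x_pq: "x = (1 - \<theta>) *\<^sub>R p + \<theta> *\<^sub>R q"
    unfolding x(2) by simp
  obtain p' q' where p': "p' \<in> P'" "p' \<bullet> e = of_int m" and q': "q' \<in> P'" "q' \<bullet> e = of_int m + 1"
    and "y = (1 - (y \<bullet> e - of_int m) / (of_int m + 1 - of_int m)) *\<^sub>R p'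
           + ((y \<bullet> e - of_int m) / (of_int m + 1 - of_int m)) *\<^sub>R q'"
    by (rule two_layer_hull.layer_interpolate[OF H' y(1), of "of_int m" "of_int m + 1"])
      (use m y \<theta> in simp_all)
  then have y_pq: "y = \<theta> *\<^sub>R p' + (1 - \<theta>) *\<^sub>R q'"
    unfolding y(2) by simp
  define S where "S = slice e P l + slice e P' (m + 1)"
  have "p + q' \<in> S"
    unfolding S_def slice_def using p q' by (intro set_plus_intro) simp_all
  moreover have "q + p' \<in> S"
    using sum_shift_between_layers[OF H H' fan q(1) _ p'(1), of 1] q p' l m
    unfolding S_def slice_def by simp
  moreover have "convex S"
    unfolding S_def slice_def
    using two_layer_hull.compact_convex_layer[OF H] two_layer_hull.compact_convex_layer[OF H']
    by (simp add: convex_set_plus)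
  moreover have "x + y = (1 - \<theta>) *\<^sub>R (p + q') + \<theta> *\<^sub>R (q + p')"
    unfolding x_pq y_pq by (simp add: algebra_simps)
  ultimately show ?thesis
    using \<theta> unfolding S_def by (simp add: convexD)
qed

lemma sum_mem_integral_slices:
  fixes b c b' c' :: int
  assumes H: "two_layer_hull e B T P (of_int b) (of_int c)"
    and H': "two_layer_hull e B' T' P' (of_int b') (of_int c')"
    and fan: "normal_fan P = normal_fan P'"
    and x: "x \<in> P" and y: "y \<in> P'" and integral: "x \<bullet> e + y \<bullet> e \<in> \<int>"
  shows "\<exists>l\<in>{b..c}. \<exists>m\<in>{b'..c'}. x + y \<in> slice e P l + slice e P' m"
proof -
  obtain k where k: "x \<bullet> e + y \<bullet> e = of_int k"
    using integral Ints_cases by metis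
  define l where "l = \<lfloor>x \<bullet> e\<rfloor>"
  define \<theta> where "\<theta> = x \<bullet> e - of_int l"
  define m where "m = k - l - 1"
  have "of_int l \<le> x \<bullet> e" "x \<bullet> e < of_int l + 1"
    using floor_correct[of "x \<bullet> e"] unfolding l_def by simp_all
  then have \<theta>: "0 \<le> \<theta>" "\<theta> < 1"
    unfolding \<theta>_def by simp_all
  have x_level: "x \<bullet> e = of_int l + \<theta>" and y_level: "y \<bullet> e = of_int m + (1 - \<theta>)"
    using k unfolding m_def \<theta>_def by simp_all
  note x_bounds = two_layer_hull.level_bounds[OF H x]
  note y_bounds = two_layer_hull.level_bounds[OF H' y]
  have "of_int b < (of_int l + 1 :: real)" "(of_int l :: real) \<le> of_int c"
    "of_int b' \<le> (of_int m + 1 :: real)" "(of_int m :: real) < of_int c'"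
    using x_bounds y_bounds x_level y_level \<theta> by linarith+
  then have l: "l \<in> {b..c}" and m: "m + 1 \<in> {b'..c'}"
    by simp_all
  moreover have "x + y \<in> slice e P l + slice e P' (m + 1)"
  proof (cases "\<theta> = 0")
    case True
    then show ?thesis
      using x y x_level y_level unfolding slice_def by (intro set_plus_intro) simp_all
  next
    case False
    then have "(of_int l :: real) < of_int c" "of_int b' < (of_int m + 1 :: real)"
      using x_bounds y_bounds x_level y_level \<theta> by linarith+
    then have "l + 1 \<le> c" "b' \<le> m"
      by linarith+
    then show ?thesis
      using l m \<theta> by (intro sum_mem_slices_between_levels[OF H H' fan x x_level y y_level]) simp_all
  qed
  ultimately show ?thesis
    by blast
qed

lemma IDP_pairD:
  assumes "IDP_pair A B" "z \<in> lattice" "z \<in> A + B"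
  obtains x y where "x \<in> A \<inter> lattice" "y \<in> B \<inter> lattice" "z = x + y"
  using assms unfolding IDP_pair_def set_plus_def by blast

lemma IDP_pair_if_IDP_slices:
  fixes b c b' c' :: int
  assumes H: "two_layer_hull e B T P (of_int b) (of_int c)"
    and H': "two_layer_hull e B' T' P' (of_int b') (of_int c')"
    and fan: "normal_fan P = normal_fan P'" and e: "e \<in> Basis"
    and slices: "\<And>l m. l \<in> {b..c} \<Longrightarrow> m \<in> {b'..c'} \<Longrightarrow> IDP_pair (slice e P l) (slice e P' m)"
  shows "IDP_pair P P'"
  unfolding IDP_pair_def
proof
  fix z assume "z \<in> lattice \<inter> {x + y |x y. x \<in> P \<and> y \<in> P'}"
  then obtain x y where z: "z \<in> lattice" "z = x + y" and xy: "x \<in> P" "y \<in> P'"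
    by blast
  have "x \<bullet> e + y \<bullet> e \<in> \<int>"
    using z e unfolding lattice_def by (auto simp: inner_add_left)
  then obtain l m where lm: "l \<in> {b..c}" "m \<in> {b'..c'}" and "z \<in> slice e P l + slice e P' m"
    using sum_mem_integral_slices[OF H H' fan xy] z(2) by blast
  then obtain x' y' where "x' \<in> slice e P l \<inter> lattice" "y' \<in> slice e P' m \<inter> lattice" "z = x' + y'"
    using IDP_pairD[OF slices[OF lm] z(1)] by blast
  then show "\<exists>x\<in>P \<inter> lattice. \<exists>y\<in>P' \<inter> lattice. z = x + y"
    unfolding slice_def by blast
qed

section \<open>Prismatoids\<close>

lemma prism_over_eq_set_plus: "prism_over e Q = Q + closed_segment 0 e"
  by (force simp: prism_over_def set_plus_def in_segment)

lemma extreme_point_of_prism_over: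
  fixes Q :: "'a::euclidean_space set"
  assumes p: "p extreme_point_of prism_over e Q" and "e \<noteq> 0"
  shows "p \<in> Q \<union> (\<lambda>q. q + e) ` Q"
proof -
  obtain q t where qt: "p = q + t *\<^sub>R e" "q \<in> Q" "0 \<le> t" "t \<le> 1"
    using p unfolding extreme_point_of_def prism_over_def by blast
  have on_edge: "q + s *\<^sub>R e \<in> prism_over e Q" if "0 \<le> s" "s \<le> 1" for s
    unfolding prism_over_def using qt(2) that by (intro CollectI exI[of _ q] exI[of _ s]) simp
  have ends: "q \<in> prism_over e Q" "q + e \<in> prism_over e Q"
    using on_edge[of 0] on_edge[of 1] by simp_all
  show ?thesis
  proof (rule ccontr)
    assume "p \<notin> Q \<union> (\<lambda>q. q + e) ` Q"
    then have "t \<noteq> 0" "t \<noteq> 1"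
      using qt by auto
    then have "p \<in> open_segment q (q + e)"
      using qt \<open>e \<noteq> 0\<close> by (auto simp: in_segment algebra_simps intro!: exI[of _ t])
    then show False
      using p ends unfolding extreme_point_of_def by blast
  qed
qed

lemma face_lattice_iso_surj:
  assumes "face_lattice_iso f P R" "G face_of R"
  obtains F where "F face_of P" "f F = G"
proof -
  have "f ` {F. F face_of P} = {G. G face_of R}"
    using assms(1) unfolding face_lattice_iso_def by (simp add: bij_betw_imp_surj_on)
  with assms(2) that show ?thesis
    by (metis (mono_tags, lifting) imageE mem_Collect_eq)
qed

lemma face_lattice_iso_empty:
  assumes iso: "face_lattice_iso f P R"
  shows "f {} = {}"
proof -
  obtain G where G: "G face_of P" "f G = {}"
    using face_lattice_iso_surj[OF iso empty_face_of] .
  then have "f {} \<subseteq> f G"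
    using iso empty_face_of unfolding face_lattice_iso_def by blast
  with G show ?thesis
    by simp
qed

lemma face_lattice_iso_extreme_point:
  fixes P R :: "'a::euclidean_space set"
  assumes iso: "face_lattice_iso f P R" and R: "compact R" "convex R" and v: "v extreme_point_of P"
  obtains p where "p extreme_point_of R" "f {v} = {p}"
proof -
  have ord: "\<And>F G. F face_of P \<Longrightarrow> G face_of P \<Longrightarrow> F \<subseteq> G \<longleftrightarrow> f F \<subseteq> f G"
    using iso unfolding face_lattice_iso_def by blast
  have v_face: "{v} face_of P"
    using v face_of_singleton by blast
  then have image_face: "f {v} face_of R"
    using iso unfolding face_lattice_iso_def by (blast dest: bij_betw_apply)
  have "f {v} \<noteq> {}"
    using ord[OF v_face empty_face_of] face_lattice_iso_empty[OF iso] by auto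
  then obtain p where "p extreme_point_of f {v}"
    using extreme_point_exists_convex face_of_imp_compact[OF R(2,1) image_face]
      face_of_imp_convex[OF image_face] by blast
  then have p: "p extreme_point_of R" "p \<in> f {v}"
    using extreme_point_of_face[OF image_face] by blast+
  then obtain G where G: "G face_of P" "f G = {p}"
    using face_lattice_iso_surj[OF iso] face_of_singleton by blast
  then have "G \<subseteq> {v}" "G \<noteq> {}"
    using ord[OF G(1) v_face] p(2) face_lattice_iso_empty[OF iso] by auto
  then have "G = {v}"
    by blast
  with G p(1) that show ?thesis
    by blast
qed

lemma prismatoid_eq_convex_hull:
  fixes P T B :: "'a::euclidean_space set"
  assumes "prismatoid P T B"
  shows "P = convex hull (B \<union> T)"
proof -
  obtain e Q f where e: "e \<in> Basis" and Q: "polytope Q"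
    and iso: "face_lattice_iso f P (prism_over e Q)"
    and faces: "T face_of P" "B face_of P" and fT: "f T = (\<lambda>q. q + e) ` Q" and fB: "f B = Q"
    and P: "polytope P"
    using assms unfolding prismatoid_def by blast
  have prism: "compact (prism_over e Q)" "convex (prism_over e Q)"
    unfolding prism_over_eq_set_plus using Q
    by (simp_all add: compact_set_plus convex_set_plus polytope_imp_compact polytope_imp_convex)
  have "v \<in> B \<union> T" if v: "v extreme_point_of P" for v
  proof -
    obtain p where p: "p extreme_point_of prism_over e Q" "f {v} = {p}"
      using face_lattice_iso_extreme_point[OF iso prism v] .
    then have "f {v} \<subseteq> f B \<or> f {v} \<subseteq> f T"
      using extreme_point_of_prism_over[OF p(1)] e fB fT by (auto simp: nonzero_Basis)
    moreover have "{v} face_of P"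
      using v face_of_singleton by blast
    ultimately have "{v} \<subseteq> B \<or> {v} \<subseteq> T"
      using iso faces unfolding face_lattice_iso_def by blast
    then show ?thesis
      by blast
  qed
  then have "P \<subseteq> convex hull (B \<union> T)"
    using Krein_Milman_Minkowski[OF polytope_imp_compact[OF P] polytope_imp_convex[OF P]]
    by (metis hull_mono mem_Collect_eq subsetI)
  moreover have "convex hull (B \<union> T) \<subseteq> P"
    using faces P by (intro hull_minimal) (auto dest: face_of_imp_subset simp: polytope_imp_convex)
  ultimately show ?thesis
    by blast
qed

lemma aff_dim_convex_hull_in_hyperplane_less:
  fixes S :: "'a::euclidean_space set"
  assumes "S \<subseteq> {x. x \<bullet> e = r}" "e \<noteq> 0"
  shows "aff_dim (convex hull S) < DIM('a)"
proof -
  have "convex hull S \<subseteq> {x. e \<bullet> x = r}"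
    by (intro hull_minimal convex_hyperplane) (use assms(1) in \<open>auto simp: inner_commute\<close>)
  then have "aff_dim (convex hull S) \<le> aff_dim {x. e \<bullet> x = r}"
    by (rule aff_dim_subset)
  with assms(2) show ?thesis
    by simp
qed

lemma two_layer_hull_of_prismatoid:
  fixes P T B :: "'a::euclidean_space set"
  assumes pr: "prismatoid P T B" and dim: "aff_dim P = DIM('a)" and "e \<noteq> 0"
    and B: "B \<subseteq> {x. x \<bullet> e = b}" and T: "T \<subseteq> {x. x \<bullet> e = c}" and "b \<le> c"
  shows "two_layer_hull e B T P b c"
proof
  show hull: "P = convex hull (B \<union> T)"
    using prismatoid_eq_convex_hull[OF pr] .
  have P: "compact P" "convex P" and faces: "T face_of P" "B face_of P"
    using pr unfolding prismatoid_def by (auto simp: polytope_imp_compact polytope_imp_convex)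
  show "convex B" "compact B" "convex T" "compact T"
    using faces face_of_imp_convex face_of_imp_compact[OF P(2,1)] by auto
  have flat: "\<not> B \<union> T \<subseteq> {x. x \<bullet> e = r}" for r
  proof
    assume "B \<union> T \<subseteq> {x. x \<bullet> e = r}"
    then have "aff_dim (convex hull (B \<union> T)) < DIM('a)"
      using aff_dim_convex_hull_in_hyperplane_less \<open>e \<noteq> 0\<close> by blast
    with dim hull show False
      by simp
  qed
  show "B \<noteq> {}" "T \<noteq> {}"
    using flat[of b] flat[of c] B T by auto
  show "b < c"
  proof (rule ccontr)
    assume "\<not> b < c"
    with \<open>b \<le> c\<close> have "c = b"
      by simp
    with flat[of b] B T show False
      by auto
  qed
  show "B \<subseteq> {x. x \<bullet> e = b}" "T \<subseteq> {x. x \<bullet> e = c}"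
    using B T .
qed

theorem lemma4p4:
  fixes P P' T B T' B' :: "'a::euclidean_space set" and e :: 'a and b h b' h' :: int
  assumes "e \<in> Basis"
    and "smooth_polytope P" and "smooth_polytope P'"
    and "minkowski_equivalent P P'"
    and "prismatoid P T B" and "prismatoid P' T' B'"
    and "0 \<le> h" and "B \<subseteq> {x. x \<bullet> e = of_int b}" and "T \<subseteq> {x. x \<bullet> e = of_int (b + h)}"
    and "0 \<le> h'" and "B' \<subseteq> {x. x \<bullet> e = of_int b'}" and "T' \<subseteq> {x. x \<bullet> e = of_int (b' + h')}"
    and "\<forall>l\<in>{0..h}. \<forall>m\<in>{0..h'}. IDP_pair (slice e P (b + l)) (slice e P' (b' + m))"
  shows "IDP_pair P P'"
proof -
  have "aff_dim P = DIM('a)" "aff_dim P' = DIM('a)" "e \<noteq> 0"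
    using assms(1-3) by (auto simp: smooth_polytope_def simple_polytope_def nonzero_Basis)
  then have H: "two_layer_hull e B T P (of_int b) (of_int (b + h))"
    and H': "two_layer_hull e B' T' P' (of_int b') (of_int (b' + h'))"
    using assms(5-12) by (simp_all add: two_layer_hull_of_prismatoid)
  have fan: "normal_fan P = normal_fan P'"
    using assms(4) unfolding minkowski_equivalent_def .
  have "IDP_pair (slice e P l) (slice e P' m)" if "l \<in> {b..b + h}" "m \<in> {b'..b' + h'}" for l m
    using assms(13)[rule_format, of "l - b" "m - b'"] that by simp
  then show ?thesis
    by (rule IDP_pair_if_IDP_slices[OF H H' fan assms(1)])
qed

end
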